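(* Let $K$ be a connected 4-regular simple graph with an odd number of vertices, let $v,w$ be adjacent vertices of $K$ with no common neighbour, let the neighbours of $w$ be $v,a,b,c$ and the neighbours of $v$ be $w,d,e,f$, and let $R=K-\{v,w\}$. Let $p_1\cup p_2$ be a partition of $\{a,b,c,d,e,f\}$ where $p_1$ consists either of all of $\{a,b,c\}$ together with exactly one of $\{d,e,f\}$, or of all of $\{d,e,f\}$ together with exactly one of $\{a,b,c\}$. Let $x$ be the element of $p_1$ which is alone from its trio. Let $\tau\in\mathcal{R}_{p_1,p_2}$ and let $t$ be the tree of the 2-forest of $\tau$ containing the vertices of $p_1$. Then there is a unique vertex $y$ with the following properties: (1) either $y\in p_1$ and $y$ has degree 2 in $t$, or $y\notin p_1$ and $y$ has degree 3 in $t$; (2) removing $y$ from $t$ gives a component containing exactly two vertices of $p_1$ and a component containing exactly one vertex of $p_1$; (3) either $x=y$ or $x$ lies in one of the components of $t-y$ containing exactly one vertex of $p_1$.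
   Context: A spanning 2-forest is a spanning forest with exactly two trees (a tree may be a single vertex). For a bipartition $P=\{P_1,P_2\}$ of a subset of $V(R)$, $\mathcal{R}_P$ is the set of bipartitions of $E(R)$ such that one part is the edge set of a spanning tree of $R$ and the other is the edge set of a spanning 2-forest of $R$ with one tree containing all vertices of $P_1$ and the other containing all vertices of $P_2$. In $R$ the vertices $a,\dots,f$ have degree 3 and all other vertices have degree 4. *)

theory Defs
  imports Main
begin

definition simple_graph :: "'a set \<Rightarrow> 'a set set \<Rightarrow> bool" where
  "simple_graph V E \<longleftrightarrow> finite V \<and>
     (\<forall>e\<in>E. \<exists>u v. u \<noteq> v \<and> u \<in> V \<and> v \<in> V \<and> e = {u, v})"

definition nbrs :: "'a set set \<Rightarrow> 'a \<Rightarrow> 'a set" where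
  "nbrs E u = {z. {u, z} \<in> E}"

definition deg :: "'a set set \<Rightarrow> 'a \<Rightarrow> nat" where
  "deg E u = card {e \<in> E. u \<in> e}"

definition adjrel :: "'a set set \<Rightarrow> ('a \<times> 'a) set" where
  "adjrel E = {(u, z). {u, z} \<in> E}"

definition connected_graph :: "'a set \<Rightarrow> 'a set set \<Rightarrow> bool" where
  "connected_graph V E \<longleftrightarrow> V \<noteq> {} \<and> (\<forall>u\<in>V. \<forall>z\<in>V. (u, z) \<in> (adjrel E)\<^sup>*)"

definition comp :: "'a set \<Rightarrow> 'a set set \<Rightarrow> 'a \<Rightarrow> 'a set" where
  "comp V E x = {z \<in> V. (x, z) \<in> (adjrel E)\<^sup>*}"

definition components :: "'a set \<Rightarrow> 'a set set \<Rightarrow> 'a set set" where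
  "components V E = comp V E ` V"

definition acyclic_edges :: "'a set set \<Rightarrow> bool" where
  "acyclic_edges E \<longleftrightarrow> \<not> (\<exists>cs. length cs \<ge> 3 \<and> distinct cs \<and>
     (\<forall>i < length cs. {cs ! i, cs ! ((i + 1) mod length cs)} \<in> E))"

definition spanning_tree :: "'a set \<Rightarrow> 'a set set \<Rightarrow> 'a set set \<Rightarrow> bool" where
  "spanning_tree V E T \<longleftrightarrow> T \<subseteq> E \<and> acyclic_edges T \<and> connected_graph V T"

definition spanning_2forest :: "'a set \<Rightarrow> 'a set set \<Rightarrow> 'a set set \<Rightarrow> bool" where
  "spanning_2forest V E F \<longleftrightarrow> F \<subseteq> E \<and> acyclic_edges F \<and> card (components V F) = 2"

text \<open>The set R_P for a bipartition P = {P1, P2}; a bipartition of E(R) into a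
  spanning tree and a spanning 2-forest is recorded as the ordered pair (tree part,
  forest part).\<close>
definition RP :: "'a set \<Rightarrow> 'a set set \<Rightarrow> 'a set \<Rightarrow> 'a set \<Rightarrow> ('a set set \<times> 'a set set) set" where
  "RP V E P1 P2 = {(T, F). T \<union> F = E \<and> T \<inter> F = {} \<and> spanning_tree V E T \<and>
     spanning_2forest V E F \<and>
     (\<exists>C1\<in>components V F. \<exists>C2\<in>components V F. C1 \<noteq> C2 \<and> P1 \<subseteq> C1 \<and> P2 \<subseteq> C2)}"

end

theory Submission
  imports Defs "HOL-Library.Transitive_Closure_Table"
begin

text \<open>Every vertex of \<open>R\<close> has degree 4 in \<open>K\<close> and loses at least one edge to the spanning
  tree, and a vertex of \<open>p1\<close> loses another one to \<open>v\<close> or \<open>w\<close>. So the tree \<open>t\<close> of the 2-forest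
  containing \<open>p1\<close> has maximum degree 3, and the four marks \<open>p1\<close> have degree at most 2 in \<open>t\<close>.

  Walk in \<open>t\<close> from \<open>x\<close> towards the other marks, keeping \<open>x\<close> alone in its branch (component of
  \<open>t\<close> minus the current vertex \<open>y\<close>). The walk stops at the first \<open>y\<close> whose branches containing
  marks are as many as the degree bound at \<open>y\<close> allows; then one of them holds two marks and
  the others one mark each, which gives (1)--(3). Two such vertices \<open>y1 \<noteq> y2\<close> are impossible:
  the branch at \<open>y1\<close> towards \<open>y2\<close> and the branch at \<open>y2\<close> towards \<open>y1\<close> cover \<open>t\<close> and hold at
  most two marks each, hence exactly two each, leaving no branch with a single mark for \<open>x\<close>.\<close>

lemma rtrancl_adjrel_sym: "(u, z) \<in> (adjrel E)\<^sup>* \<Longrightarrow> (z, u) \<in> (adjrel E)\<^sup>*"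
proof -
  assume "(u, z) \<in> (adjrel E)\<^sup>*"
  moreover have "sym (adjrel E)"
    by (auto simp: sym_def adjrel_def insert_commute)
  ultimately show ?thesis
    by (meson sym_rtrancl symD)
qed

lemma rtrancl_adjrel_mono:
  "E1 \<subseteq> E2 \<Longrightarrow> (u, z) \<in> (adjrel E1)\<^sup>* \<Longrightarrow> (u, z) \<in> (adjrel E2)\<^sup>*"
  by (rule rtrancl_mono[THEN subsetD], auto simp: adjrel_def)

lemma rtrancl_adjrel_restrict:
  assumes "(z, u) \<in> (adjrel E)\<^sup>*"
    and "\<And>p q. {p, q} \<in> E \<Longrightarrow> (z, p) \<in> (adjrel E)\<^sup>* \<Longrightarrow> (z, q) \<in> (adjrel E)\<^sup>* \<Longrightarrow> Q {p, q}"
  shows "(z, u) \<in> (adjrel {g \<in> E. Q g})\<^sup>*"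
  using assms(1)
proof (induction rule: rtrancl_induct)
  case base
  then show ?case by simp
next
  case (step u u')
  then have "{u, u'} \<in> E" "(z, u') \<in> (adjrel E)\<^sup>*"
    by (auto simp: adjrel_def intro: rtrancl_into_rtrancl)
  with step assms(2) have "(u, u') \<in> adjrel {g \<in> E. Q g}"
    by (simp add: adjrel_def)
  with step.IH show ?case
    by (rule rtrancl_into_rtrancl)
qed

lemma rtrancl_adjrel_avoid_or_neighbour:
  assumes "(z, u) \<in> (adjrel E)\<^sup>*" and "z \<noteq> y"
  shows "(u \<noteq> y \<and> (z, u) \<in> (adjrel {g \<in> E. y \<notin> g})\<^sup>*) \<or>
         (\<exists>n. (z, n) \<in> (adjrel {g \<in> E. y \<notin> g})\<^sup>* \<and> {n, y} \<in> E)"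
  using assms(1)
proof (induction rule: rtrancl_induct)
  case base
  then show ?case using assms(2) by simp
next
  case (step u u')
  then have "{u, u'} \<in> E" by (simp add: adjrel_def)
  with step.IH show ?case
    by (cases "u' = y") (auto simp: adjrel_def intro: rtrancl_into_rtrancl)
qed

lemma acyclic_edges_subset: "acyclic_edges F \<Longrightarrow> E \<subseteq> F \<Longrightarrow> acyclic_edges E"
  unfolding acyclic_edges_def by blast

lemma acyclic_edges_bridge:
  assumes acyclic: "acyclic_edges E" and edge: "{y, n} \<in> E" and "y \<noteq> n"
  shows "(y, n) \<notin> (adjrel (E - {{y, n}}))\<^sup>*"
proof
  let ?r = "\<lambda>a b. (a, b) \<in> adjrel (E - {{y, n}})"
  assume "(y, n) \<in> (adjrel (E - {{y, n}}))\<^sup>*"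
  then have "?r\<^sup>*\<^sup>* y n"
    by (simp add: rtranclp_rtrancl_eq)
  then obtain xs where "rtrancl_path ?r y xs n"
    by (auto simp: rtranclp_eq_rtrancl_path)
  then obtain ys where path: "rtrancl_path ?r y ys n" and dist: "distinct (y # ys)"
    by (rule rtrancl_path_distinct)
  have "ys \<noteq> []"
    using path \<open>y \<noteq> n\<close> by (auto elim: rtrancl_path.cases)
  have last: "last ys = n"
    using path \<open>ys \<noteq> []\<close> by (rule rtrancl_path_last)
  have "length ys \<noteq> 1"
  proof
    assume "length ys = 1"
    then have "ys = [n]"
      using last by (cases ys) auto
    then show False
      using rtrancl_path_nth[OF path, of 0] by (simp add: adjrel_def)
  qed
  with \<open>ys \<noteq> []\<close> have length: "length (y # ys) \<ge> 3"
    by (cases ys) (auto simp: Suc_le_eq)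
  have "{(y # ys) ! i, (y # ys) ! ((i + 1) mod length (y # ys))} \<in> E"
    if "i < length (y # ys)" for i
  proof (cases "i < length ys")
    case True
    then show ?thesis
      using rtrancl_path_nth[OF path True] by (simp add: adjrel_def)
  next
    case False
    with that have "i = length ys" by simp
    then show ?thesis
      using edge last \<open>ys \<noteq> []\<close> by (simp add: last_conv_nth insert_commute)
  qed
  with acyclic dist length show False
    unfolding acyclic_edges_def by blast
qed

lemma card_nbrs_eq_deg:
  assumes "simple_graph V E"
  shows "card (nbrs E u) = deg E u"
proof -
  have "{g \<in> E. u \<in> g} = (\<lambda>z. {u, z}) ` nbrs E u"
  proof (intro equalityI subsetI)
    fix g assume "g \<in> {g \<in> E. u \<in> g}"
    moreover obtain p q where "g = {p, q}"
      using assms calculation unfolding simple_graph_def by blast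
    ultimately show "g \<in> (\<lambda>z. {u, z}) ` nbrs E u"
      by (auto simp: nbrs_def insert_commute)
  qed (auto simp: nbrs_def)
  moreover have "inj_on (\<lambda>z. {u, z}) (nbrs E u)"
    by (auto simp: inj_on_def doubleton_eq_iff)
  ultimately show ?thesis
    by (simp add: deg_def card_image)
qed

lemma deg_le_Diff:
  assumes "finite E" and "F \<subseteq> E - A" and "A \<subseteq> {g \<in> E. u \<in> g}"
  shows "deg F u \<le> deg E u - card A"
proof -
  have "deg F u \<le> card ({g \<in> E. u \<in> g} - A)"
    unfolding deg_def using assms by (intro card_mono) auto
  also have "\<dots> = deg E u - card A"
  proof -
    have "A \<subseteq> E"
      using assms(3) by auto
    then have "finite A"
      using assms(1) by (rule finite_subset)
    then show ?thesis
      unfolding deg_def using assms(3) by (rule card_Diff_subset)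
  qed
  finally show ?thesis .
qed

lemma connected_graph_edge_at:
  assumes "connected_graph V T" and "u \<in> V" "u' \<in> V" "u \<noteq> u'"
  shows "\<exists>g\<in>T. u \<in> g"
proof -
  have "(u, u') \<in> (adjrel T)\<^sup>*"
    using assms by (simp add: connected_graph_def)
  with \<open>u \<noteq> u'\<close> obtain s where "(u, s) \<in> adjrel T"
    by (blast elim: converse_rtranclE)
  then show ?thesis
    by (auto simp: adjrel_def)
qed

lemma components_eq_comp:
  assumes "C \<in> components V F" and "x \<in> C"
  shows "C = comp V F x"
proof -
  obtain z where C: "C = comp V F z"
    using assms(1) by (auto simp: components_def)
  with assms(2) have zx: "(z, x) \<in> (adjrel F)\<^sup>*"
    by (simp add: comp_def)
  have "(z, u) \<in> (adjrel F)\<^sup>* \<longleftrightarrow> (x, u) \<in> (adjrel F)\<^sup>*" for u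
    using rtrancl_trans[OF zx] rtrancl_trans[OF rtrancl_adjrel_sym[OF zx]] by blast
  then show ?thesis
    by (simp add: C comp_def)
qed

lemma card_fibres_two_one:
  assumes fin: "finite A" and card: "card A = card (g ` A) + 1" and two: "2 \<le> card (g ` A)"
  shows "\<exists>a\<in>A. \<exists>b\<in>A. card {z \<in> A. g z = g a} = 2 \<and> card {z \<in> A. g z = g b} = 1"
proof -
  let ?F = "\<lambda>c. card {z \<in> A. g z = c}"
  have pos: "1 \<le> ?F c" if "c \<in> g ` A" for c
    using that fin by (auto simp: Suc_le_eq card_gt_0_iff)
  have "\<not> inj_on g A"
    using card by (intro pigeonhole) simp
  then obtain a a' where a: "a \<in> A" "a' \<in> A" "a \<noteq> a'" "g a = g a'"
    by (auto simp: inj_on_def)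
  then have "card {a, a'} \<le> ?F (g a)"
    using fin by (intro card_mono) auto
  with a have Fa: "2 \<le> ?F (g a)" by simp
  have "g ` A \<noteq> {g a}"
    using two by auto
  then obtain b where b: "b \<in> A" "g b \<noteq> g a"
    using a by blast
  let ?rest = "g ` A - {g a} - {g b}"
  have "card A = (\<Sum>c\<in>g ` A. ?F c)"
    using sum.image_gen[OF fin, of "\<lambda>_. 1 :: nat" g] by simp
  also have "\<dots> = ?F (g a) + (\<Sum>c\<in>g ` A - {g a}. ?F c)"
    using fin a by (intro sum.remove) auto
  also have "(\<Sum>c\<in>g ` A - {g a}. ?F c) = ?F (g b) + (\<Sum>c\<in>?rest. ?F c)"
    using fin b by (intro sum.remove) auto
  finally have sum: "card A = ?F (g a) + (?F (g b) + (\<Sum>c\<in>?rest. ?F c))" .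
  have "card ?rest \<le> (\<Sum>c\<in>?rest. ?F c)"
    using sum_mono[of ?rest "\<lambda>_. 1" ?F] pos by simp
  moreover have "card ?rest + 2 = card (g ` A)"
    using fin a b two by (simp add: card_Diff_singleton_if)
  ultimately have "?F (g a) = 2 \<and> ?F (g b) = 1"
    using sum card Fa pos[OF imageI[OF b(1)]] by linarith
  with a b show ?thesis by blast
qed

locale finite_tree =
  fixes Vt :: "'a set" and Et :: "'a set set"
  assumes simple: "simple_graph Vt Et"
    and connected: "connected_graph Vt Et"
    and acyclic: "acyclic_edges Et"
begin

definition branch :: "'a \<Rightarrow> 'a \<Rightarrow> 'a set" where
  "branch y z = comp (Vt - {y}) {g \<in> Et. y \<notin> g} z"

definition branches :: "'a \<Rightarrow> 'a set set" where
  "branches y = components (Vt - {y}) {g \<in> Et. y \<notin> g}"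

lemma finite_vertices: "finite Vt"
  using simple by (simp add: simple_graph_def)

lemma edge_subset: "g \<in> Et \<Longrightarrow> g \<subseteq> Vt"
  using simple by (auto simp: simple_graph_def)

lemma reachable: "u \<in> Vt \<Longrightarrow> z \<in> Vt \<Longrightarrow> (u, z) \<in> (adjrel Et)\<^sup>*"
  using connected by (simp add: connected_graph_def)

lemma rtrancl_avoiding_closed:
  "(z, u) \<in> (adjrel {g \<in> Et. y \<notin> g})\<^sup>* \<Longrightarrow> z \<in> Vt - {y} \<Longrightarrow> u \<in> Vt - {y}"
proof (induction rule: rtrancl_induct)
  case (step u u')
  then show ?case
    using edge_subset by (auto simp: adjrel_def)
qed simp

lemma mem_branch_iff:
  "u \<in> branch y z \<longleftrightarrow> u \<in> Vt - {y} \<and> (z, u) \<in> (adjrel {g \<in> Et. y \<notin> g})\<^sup>*"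
  by (simp add: branch_def comp_def)

lemma branch_subset: "branch y z \<subseteq> Vt - {y}"
  by (auto simp: mem_branch_iff)

lemma self_mem_branch: "z \<in> Vt - {y} \<Longrightarrow> z \<in> branch y z"
  by (simp add: mem_branch_iff)

lemma branch_eq: "u \<in> branch y z \<Longrightarrow> branch y u = branch y z"
  unfolding mem_branch_iff set_eq_iff
  by (meson rtrancl_adjrel_sym rtrancl_trans)

lemma branch_sym: "u \<in> branch y z \<Longrightarrow> z \<in> branch y u"
proof -
  assume "u \<in> branch y z"
  then have u: "u \<in> Vt - {y}" and "(u, z) \<in> (adjrel {g \<in> Et. y \<notin> g})\<^sup>*"
    by (auto simp: mem_branch_iff intro: rtrancl_adjrel_sym)
  with rtrancl_avoiding_closed show ?thesis
    by (simp add: mem_branch_iff)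
qed

lemma branch_self_empty: "branch y y = {}"
  using branch_sym branch_subset by blast

lemma branches_eq: "branches y = branch y ` (Vt - {y})"
  by (simp add: branches_def components_def branch_def)

lemma branches_disjoint:
  "C \<in> branches y \<Longrightarrow> C' \<in> branches y \<Longrightarrow> C \<noteq> C' \<Longrightarrow> C \<inter> C' = {}"
  unfolding branches_eq using branch_eq by blast

lemma branches_outside: "y \<notin> Vt \<Longrightarrow> branches y \<subseteq> {Vt}"
proof -
  assume "y \<notin> Vt"
  then have "Vt - {y} = Vt" and "{g \<in> Et. y \<notin> g} = Et"
    using edge_subset by auto
  then show ?thesis
    using reachable by (auto simp: branches_def components_def comp_def)
qed

lemma branch_has_neighbour:
  assumes "y \<in> Vt" and "z \<in> Vt - {y}"
  shows "\<exists>n \<in> branch y z. {y, n} \<in> Et"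
proof -
  have "(z, y) \<in> (adjrel Et)\<^sup>*"
    using assms reachable by blast
  then obtain n where "(z, n) \<in> (adjrel {g \<in> Et. y \<notin> g})\<^sup>*" "{n, y} \<in> Et"
    using rtrancl_adjrel_avoid_or_neighbour[of z y Et y] assms(2) by blast
  with assms(2) show ?thesis
    using rtrancl_avoiding_closed by (auto simp: mem_branch_iff insert_commute)
qed

lemma card_branches_le_deg:
  assumes "y \<in> Vt" and "A \<subseteq> Vt - {y}"
  shows "card (branch y ` A) \<le> deg Et y"
proof -
  have "branch y ` A \<subseteq> branch y ` nbrs Et y"
  proof
    fix C assume "C \<in> branch y ` A"
    then obtain z where z: "z \<in> A" "C = branch y z" by blast
    with assms obtain n where "n \<in> branch y z" "{y, n} \<in> Et"
      using branch_has_neighbour by blast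
    then have "C = branch y n" "n \<in> nbrs Et y"
      using z branch_eq by (auto simp: nbrs_def)
    then show "C \<in> branch y ` nbrs Et y" by blast
  qed
  moreover have "finite (nbrs Et y)"
    using finite_vertices edge_subset by (auto simp: nbrs_def intro: finite_subset)
  ultimately have "card (branch y ` A) \<le> card (branch y ` nbrs Et y)"
    by (simp add: card_mono)
  also have "\<dots> \<le> card (nbrs Et y)"
    using \<open>finite (nbrs Et y)\<close> by (rule card_image_le)
  also have "\<dots> = deg Et y"
    using simple by (rule card_nbrs_eq_deg)
  finally show ?thesis .
qed

lemma branch_subset_branch:
  assumes u: "u \<in> Vt - {y}" and "y' \<notin> branch y u"
  shows "branch y u \<subseteq> branch y' u"
proof
  fix z assume z: "z \<in> branch y u"
  have "(u, z) \<in> (adjrel {g \<in> {g \<in> Et. y \<notin> g}. y' \<notin> g})\<^sup>*"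
  proof (rule rtrancl_adjrel_restrict)
    show "(u, z) \<in> (adjrel {g \<in> Et. y \<notin> g})\<^sup>*"
      using z by (simp add: mem_branch_iff)
    fix p q assume "(u, p) \<in> (adjrel {g \<in> Et. y \<notin> g})\<^sup>*" "(u, q) \<in> (adjrel {g \<in> Et. y \<notin> g})\<^sup>*"
    then have "p \<in> branch y u" "q \<in> branch y u"
      using u rtrancl_avoiding_closed by (auto simp: mem_branch_iff)
    then show "y' \<notin> {p, q}"
      using assms(2) by auto
  qed
  then have "(u, z) \<in> (adjrel {g \<in> Et. y' \<notin> g})\<^sup>*"
    by (rule rtrancl_adjrel_mono[rotated]) auto
  moreover have "z \<in> Vt - {y'}"
    using z assms(2) branch_subset by blast
  ultimately show "z \<in> branch y' u"
    by (simp add: mem_branch_iff)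
qed

lemma branch_subset_opposite:
  assumes "y \<in> Vt" and "y' \<in> Vt - {y}" and "y' \<notin> branch y z"
  shows "insert y (branch y z) \<subseteq> branch y' y"
proof
  fix u assume "u \<in> insert y (branch y z)"
  then consider "u = y" | "u \<in> branch y z" by blast
  then show "u \<in> branch y' y"
  proof cases
    case 1
    with assms show ?thesis by (auto intro: self_mem_branch)
  next
    case 2
    then have u: "u \<in> Vt - {y}" and same: "branch y u = branch y z"
      using branch_subset branch_eq by auto
    with assms obtain n where n: "n \<in> branch y u" "{y, n} \<in> Et"
      using branch_has_neighbour by blast
    with u same assms(3) have "n \<in> branch y' u"
      using branch_subset_branch by blast
    moreover from this have "(n, y) \<in> adjrel {g \<in> Et. y' \<notin> g}"
      using n(2) assms(2) branch_subset by (fastforce simp: adjrel_def insert_commute)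
    ultimately have "y \<in> branch y' u"
      using assms(1,2) by (auto simp: mem_branch_iff intro: rtrancl_into_rtrancl)
    then show ?thesis
      by (rule branch_sym)
  qed
qed

lemma branch_subset_step:
  assumes "y \<in> Vt" and "z \<in> Vt" and "n \<in> Vt - {y}" and "n \<notin> branch y z"
  shows "insert y (branch y z) \<subseteq> branch n z"
proof -
  have opposite: "insert y (branch y z) \<subseteq> branch n y"
    using assms by (intro branch_subset_opposite) auto
  moreover have "z \<in> insert y (branch y z)"
    using assms(2) self_mem_branch by auto
  ultimately have "branch n z = branch n y"
    using branch_eq by blast
  with opposite show ?thesis
    by simp
qed

lemma facing_branches_cover:
  assumes "y1 \<in> Vt" "y2 \<in> Vt" "y1 \<noteq> y2"
  shows "Vt \<subseteq> branch y1 y2 \<union> branch y2 y1"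
proof
  fix q assume "q \<in> Vt"
  show "q \<in> branch y1 y2 \<union> branch y2 y1"
  proof (cases "q \<in> branch y1 y2")
    case False
    then have "y2 \<notin> branch y1 q"
      using branch_sym by blast
    with assms have "insert y1 (branch y1 q) \<subseteq> branch y2 y1"
      by (intro branch_subset_opposite) auto
    moreover have "q \<in> insert y1 (branch y1 q)"
      using \<open>q \<in> Vt\<close> self_mem_branch by auto
    ultimately show ?thesis
      by blast
  qed simp
qed

lemma edge_sides_disjoint:
  assumes edge: "{y, n} \<in> Et"
  shows "branch y n \<inter> branch n y = {}"
proof (rule ccontr)
  assume "branch y n \<inter> branch n y \<noteq> {}"
  then obtain q where "(n, q) \<in> (adjrel {g \<in> Et. y \<notin> g})\<^sup>*" "(y, q) \<in> (adjrel {g \<in> Et. n \<notin> g})\<^sup>*"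
    by (auto simp: mem_branch_iff)
  moreover have "{g \<in> Et. y \<notin> g} \<subseteq> Et - {{y, n}}" "{g \<in> Et. n \<notin> g} \<subseteq> Et - {{y, n}}"
    by auto
  ultimately have "(y, q) \<in> (adjrel (Et - {{y, n}}))\<^sup>*" "(q, n) \<in> (adjrel (Et - {{y, n}}))\<^sup>*"
    by (meson rtrancl_adjrel_mono rtrancl_adjrel_sym)+
  then have "(y, n) \<in> (adjrel (Et - {{y, n}}))\<^sup>*"
    by (rule rtrancl_trans)
  moreover have "y \<noteq> n"
    using edge simple by (auto simp: simple_graph_def doubleton_eq_iff)
  ultimately show False
    using acyclic_edges_bridge[OF acyclic edge] by blast
qed

end

lemma finite_tree_comp:
  assumes simple: "simple_graph V F" and acyclic: "acyclic_edges F" and "x \<in> V"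
  shows "finite_tree (comp V F x) {g \<in> F. g \<subseteq> comp V F x}"
proof
  let ?C = "comp V F x"
  have "finite ?C"
    using simple by (auto simp: simple_graph_def comp_def)
  moreover have "\<exists>p q. p \<noteq> q \<and> p \<in> ?C \<and> q \<in> ?C \<and> g = {p, q}" if "g \<in> F" "g \<subseteq> ?C" for g
  proof -
    obtain p q where "p \<noteq> q" "g = {p, q}"
      using simple \<open>g \<in> F\<close> by (auto simp: simple_graph_def)
    with \<open>g \<subseteq> ?C\<close> show ?thesis by auto
  qed
  ultimately show "simple_graph ?C {g \<in> F. g \<subseteq> ?C}"
    by (auto simp: simple_graph_def)
  show "acyclic_edges {g \<in> F. g \<subseteq> ?C}"
    using acyclic by (rule acyclic_edges_subset) auto
  have reach: "(x, u) \<in> (adjrel {g \<in> F. g \<subseteq> ?C})\<^sup>*" if "u \<in> ?C" for u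
  proof (rule rtrancl_adjrel_restrict)
    show "(x, u) \<in> (adjrel F)\<^sup>*"
      using that by (simp add: comp_def)
    fix p q assume "{p, q} \<in> F" "(x, p) \<in> (adjrel F)\<^sup>*" "(x, q) \<in> (adjrel F)\<^sup>*"
    moreover from \<open>{p, q} \<in> F\<close> have "p \<in> V" "q \<in> V"
      using simple by (auto simp: simple_graph_def doubleton_eq_iff)
    ultimately show "{p, q} \<subseteq> ?C"
      by (simp add: comp_def)
  qed
  show "connected_graph ?C {g \<in> F. g \<subseteq> ?C}"
    unfolding connected_graph_def
  proof (intro conjI ballI)
    show "?C \<noteq> {}"
      using \<open>x \<in> V\<close> by (auto simp: comp_def)
    fix u z assume "u \<in> ?C" "z \<in> ?C"
    show "(u, z) \<in> (adjrel {g \<in> F. g \<subseteq> ?C})\<^sup>*"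
      using rtrancl_adjrel_sym[OF reach[OF \<open>u \<in> ?C\<close>]] reach[OF \<open>z \<in> ?C\<close>]
      by (rule rtrancl_trans)
  qed
qed

locale marked_tree = finite_tree +
  fixes P :: "'a set" and x :: 'a
  assumes x_marked: "x \<in> P" and marks_in_tree: "P \<subseteq> Vt" and card_marks: "card P = 4"
    and deg_marked: "\<And>u. u \<in> P \<Longrightarrow> deg Et u \<le> 2"
    and deg_le_3: "\<And>u. u \<in> Vt \<Longrightarrow> deg Et u \<le> 3"
begin

definition degree_saturated :: "'a \<Rightarrow> bool" where
  "degree_saturated y \<longleftrightarrow> (y \<in> P \<and> deg Et y = 2) \<or> (y \<notin> P \<and> deg Et y = 3)"

definition splits_two_one :: "'a \<Rightarrow> bool" where
  "splits_two_one y \<longleftrightarrow>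
     (\<exists>C1\<in>branches y. \<exists>C2\<in>branches y. card (C1 \<inter> P) = 2 \<and> card (C2 \<inter> P) = 1)"

definition x_in_single_branch :: "'a \<Rightarrow> bool" where
  "x_in_single_branch y \<longleftrightarrow> x = y \<or> (\<exists>C\<in>branches y. x \<in> C \<and> card (C \<inter> P) = 1)"

definition pivot :: "'a \<Rightarrow> bool" where
  "pivot y \<longleftrightarrow> degree_saturated y \<and> splits_two_one y \<and> x_in_single_branch y"

lemma finite_marks: "finite P"
  using marks_in_tree finite_vertices by (rule finite_subset)

lemma splits_two_one_in_tree: "splits_two_one y \<Longrightarrow> y \<in> Vt"
proof (rule ccontr)
  assume "splits_two_one y" "y \<notin> Vt"
  then obtain C where "C \<in> branches y" "card (C \<inter> P) = 2"
    unfolding splits_two_one_def by blast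
  with \<open>y \<notin> Vt\<close> have "card (Vt \<inter> P) = 2"
    using branches_outside by blast
  then show False
    using marks_in_tree card_marks by (simp add: Int_absorb1)
qed

lemma card_branch_marks_le_2:
  assumes "splits_two_one y" and C: "C \<in> branches y"
  shows "card (C \<inter> P) \<le> 2"
proof -
  obtain C1 C2 where C12: "C1 \<in> branches y" "C2 \<in> branches y"
    "card (C1 \<inter> P) = 2" "card (C2 \<inter> P) = 1"
    using assms(1) unfolding splits_two_one_def by blast
  show ?thesis
  proof (cases "C = C1 \<or> C = C2")
    case False
    have "C1 \<noteq> C2"
      using C12 by auto
    then have disjoint: "C \<inter> C1 = {}" "C \<inter> C2 = {}" "C1 \<inter> C2 = {}"
      using False branches_disjoint C C12 by blast+
    have "card (C \<inter> P) + card (C1 \<inter> P) = card ((C \<inter> P) \<union> (C1 \<inter> P))"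
      using finite_marks disjoint by (intro card_Un_disjoint[symmetric]) auto
    then have "card (C \<inter> P) + card (C1 \<inter> P) + card (C2 \<inter> P) =
        card ((C \<inter> P) \<union> (C1 \<inter> P) \<union> (C2 \<inter> P))"
      using finite_marks disjoint by (subst card_Un_disjoint) auto
    also have "\<dots> \<le> card P"
      using finite_marks by (intro card_mono) auto
    finally show ?thesis
      using C12 card_marks by simp
  qed (use C12 in auto)
qed

lemma x_notin_branch_with_two_marks:
  assumes "x_in_single_branch y" and C: "C \<in> branches y" "card (C \<inter> P) = 2"
  shows "x \<notin> C"
proof
  assume "x \<in> C"
  from assms(1) consider "x = y" | C' where "C' \<in> branches y" "x \<in> C'" "card (C' \<inter> P) = 1"
    unfolding x_in_single_branch_def by blast
  then show False
  proof cases
    case 1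
    with C \<open>x \<in> C\<close> show False
      using branch_subset by (auto simp: branches_eq)
  next
    case 2
    with C \<open>x \<in> C\<close> show False
      using branches_disjoint by fastforce
  qed
qed

lemma splits_two_one_unique:
  assumes "splits_two_one y1" "x_in_single_branch y1" "splits_two_one y2" "x_in_single_branch y2"
  shows "y1 = y2"
proof (rule ccontr)
  assume "y1 \<noteq> y2"
  have in_tree: "y1 \<in> Vt" "y2 \<in> Vt"
    using assms splits_two_one_in_tree by auto
  define B1 B2 where "B1 = branch y1 y2" and "B2 = branch y2 y1"
  have branches: "B1 \<in> branches y1" "B2 \<in> branches y2"
    using in_tree \<open>y1 \<noteq> y2\<close> by (auto simp: B1_def B2_def branches_eq)
  have cover: "P \<subseteq> B1 \<union> B2"
    using facing_branches_cover[OF in_tree \<open>y1 \<noteq> y2\<close>] marks_in_tree by (auto simp: B1_def B2_def)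
  then have "P = (B1 \<inter> P) \<union> (B2 \<inter> P)"
    by blast
  then have "card P \<le> card (B1 \<inter> P) + card (B2 \<inter> P)"
    by (metis card_Un_le)
  moreover have "card (B1 \<inter> P) \<le> 2" "card (B2 \<inter> P) \<le> 2"
    using assms branches card_branch_marks_le_2 by auto
  ultimately have "card (B1 \<inter> P) = 2" "card (B2 \<inter> P) = 2"
    using card_marks by auto
  then have "x \<notin> B1" "x \<notin> B2"
    using assms branches x_notin_branch_with_two_marks by auto
  then show False
    using cover x_marked by blast
qed

text \<open>The invariant of the walk from \<open>x\<close>.\<close>
definition isolates_x :: "'a \<Rightarrow> bool" where
  "isolates_x y \<longleftrightarrow> y \<in> Vt \<and> (y = x \<or> branch y x \<inter> P = {x})"

definition marked_branches :: "'a \<Rightarrow> 'a set set" where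
  "marked_branches y = branch y ` (P - {y})"

lemma x_in_single_branch_if_isolates_x:
  assumes "isolates_x y"
  shows "x_in_single_branch y"
proof (cases "y = x")
  case False
  with assms have marks: "branch y x \<inter> P = {x}"
    by (simp add: isolates_x_def)
  then have "x \<in> Vt - {y}"
    using branch_subset by blast
  then have "branch y x \<in> branches y"
    by (simp add: branches_eq)
  moreover have "x \<in> branch y x" "card (branch y x \<inter> P) = 1"
    using marks by auto
  ultimately show ?thesis
    unfolding x_in_single_branch_def by blast
qed (simp add: x_in_single_branch_def)

lemma branch_marks_eq_fibre:
  assumes "a \<in> P - {y}"
  shows "{z \<in> P - {y}. branch y z = branch y a} = branch y a \<inter> P"
proof (intro equalityI subsetI)
  fix z assume "z \<in> {z \<in> P - {y}. branch y z = branch y a}"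
  then have "z \<in> P" "z \<in> Vt - {y}" "branch y z = branch y a"
    using marks_in_tree by auto
  then show "z \<in> branch y a \<inter> P"
    using self_mem_branch by blast
next
  fix z assume "z \<in> branch y a \<inter> P"
  then show "z \<in> {z \<in> P - {y}. branch y z = branch y a}"
    using branch_subset branch_eq by blast
qed

lemma card_marked_branches_le:
  assumes "y \<in> Vt"
  shows "card (marked_branches y) \<le> deg Et y" and "deg Et y \<le> (if y \<in> P then 2 else 3)"
proof -
  show "card (marked_branches y) \<le> deg Et y"
    unfolding marked_branches_def using assms marks_in_tree by (intro card_branches_le_deg) auto
  show "deg Et y \<le> (if y \<in> P then 2 else 3)"
    using assms deg_marked deg_le_3 by simp
qed

lemma pivot_if_saturated:
  assumes isolates: "isolates_x y" and saturated: "card (marked_branches y) = (if y \<in> P then 2 else 3)"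
  shows "pivot y"
proof -
  have "y \<in> Vt"
    using isolates by (simp add: isolates_x_def)
  then have "degree_saturated y"
    using card_marked_branches_le[OF \<open>y \<in> Vt\<close>] saturated
    by (cases "y \<in> P") (simp_all add: degree_saturated_def)
  have "finite (P - {y})"
    using finite_marks by simp
  moreover have "card (P - {y}) = card (branch y ` (P - {y})) + 1"
    using saturated card_marks finite_marks
    by (cases "y \<in> P") (simp_all add: marked_branches_def)
  moreover have "2 \<le> card (branch y ` (P - {y}))"
    using saturated by (simp add: marked_branches_def)
  ultimately have "\<exists>a\<in>P - {y}. \<exists>b\<in>P - {y}. card {z \<in> P - {y}. branch y z = branch y a} = 2 \<and>
      card {z \<in> P - {y}. branch y z = branch y b} = 1"
    by (rule card_fibres_two_one)
  then obtain a b where a: "a \<in> P - {y}" and b: "b \<in> P - {y}"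
    and "card {z \<in> P - {y}. branch y z = branch y a} = 2"
    and "card {z \<in> P - {y}. branch y z = branch y b} = 1"
    by blast
  then have "card (branch y a \<inter> P) = 2" "card (branch y b \<inter> P) = 1"
    unfolding branch_marks_eq_fibre[OF a] branch_marks_eq_fibre[OF b] by auto
  moreover have "a \<in> Vt - {y}" "b \<in> Vt - {y}"
    using a b marks_in_tree by auto
  then have "branch y a \<in> branches y" "branch y b \<in> branches y"
    by (simp_all add: branches_eq)
  ultimately have "splits_two_one y"
    unfolding splits_two_one_def by blast
  with \<open>degree_saturated y\<close> show ?thesis
    using isolates x_in_single_branch_if_isolates_x by (simp add: pivot_def)
qed

lemma marks_Diff_two_nonempty: "P - {u, v} \<noteq> {}"
proof
  assume "P - {u, v} = {}"
  then have "card P \<le> card {u, v}"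
    by (intro card_mono) auto
  also have "\<dots> \<le> 2"
    by (simp add: card_insert_if)
  finally show False
    using card_marks by simp
qed

lemma unsaturated_other_marks_one_branch:
  assumes isolates: "isolates_x y"
    and unsaturated: "card (marked_branches y) < (if y \<in> P then 2 else 3)"
  shows "card (branch y ` (P - {x, y})) = 1" and "y \<in> P \<Longrightarrow> y = x"
proof -
  let ?N = "branch y ` (P - {x, y})"
  have "P - {x, y} \<noteq> {}"
    by (rule marks_Diff_two_nonempty)
  then have N_pos: "1 \<le> card ?N"
    using finite_marks by (simp add: Suc_le_eq card_gt_0_iff)
  have "card ?N \<le> 1 \<and> (y \<in> P \<longrightarrow> y = x)"
  proof (cases "y = x")
    case True
    then have "marked_branches y = ?N"
      by (simp add: marked_branches_def)
    with unsaturated True x_marked show ?thesis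
      by simp
  next
    case False
    with isolates have x_branch: "branch y x \<inter> P = {x}"
      by (simp add: isolates_x_def)
    have "branch y x \<notin> ?N"
    proof
      assume "branch y x \<in> ?N"
      then obtain q where q: "q \<in> P - {x, y}" "branch y x = branch y q" by blast
      then have "q \<in> branch y q"
        using marks_in_tree by (intro self_mem_branch) auto
      with q x_branch show False by auto
    qed
    moreover have "marked_branches y = insert (branch y x) ?N"
      using False x_marked by (auto simp: marked_branches_def)
    moreover have "finite ?N"
      using finite_marks by simp
    ultimately have "Suc (card ?N) < (if y \<in> P then 2 else 3)"
      using unsaturated by simp
    with N_pos show ?thesis
      by (auto split: if_splits)
  qed
  with N_pos show "card ?N = 1" "y \<in> P \<Longrightarrow> y = x"
    by auto
qed

lemma marks_in_one_branch_if_unsaturated: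
  assumes isolates: "isolates_x y"
    and unsaturated: "card (marked_branches y) < (if y \<in> P then 2 else 3)"
  shows "\<exists>n. {y, n} \<in> Et \<and> P - {x} \<subseteq> branch y n"
proof -
  obtain D where D: "branch y ` (P - {x, y}) = {D}"
    using unsaturated_other_marks_one_branch(1)[OF assms] by (rule card_1_singletonE)
  then obtain r where r: "r \<in> P - {x, y}" "D = branch y r"
    by blast
  have marks: "P - {x} \<subseteq> branch y r"
  proof
    fix q assume "q \<in> P - {x}"
    with unsaturated_other_marks_one_branch(2)[OF assms] have q: "q \<in> P - {x, y}"
      by auto
    with D r have "branch y q = branch y r"
      by blast
    moreover have "q \<in> branch y q"
      using q marks_in_tree by (intro self_mem_branch) auto
    ultimately show "q \<in> branch y r"
      by simp
  qed
  have "y \<in> Vt" "r \<in> Vt - {y}"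
    using isolates r marks_in_tree by (auto simp: isolates_x_def)
  then obtain n where "n \<in> branch y r" "{y, n} \<in> Et"
    using branch_has_neighbour by blast
  with marks show ?thesis
    using branch_eq by metis
qed

text \<open>A second mark in the branch at \<open>n\<close> containing \<open>x\<close> would lie on both sides of the
  edge \<open>{y, n}\<close>.\<close>
lemma isolates_x_advance:
  assumes isolates: "isolates_x y" and edge: "{y, n} \<in> Et" and marks: "P - {x} \<subseteq> branch y n"
  shows "isolates_x n \<and> branch y x \<subset> branch n x"
proof -
  have y: "y \<in> Vt" and x_near: "x \<in> insert y (branch y x)"
    using isolates by (auto simp: isolates_x_def)
  have n: "n \<in> Vt - {y}"
    using edge edge_subset simple by (auto simp: simple_graph_def doubleton_eq_iff)
  have "n \<notin> branch y x"
  proof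
    assume "n \<in> branch y x"
    then have "branch y n = branch y x"
      by (rule branch_eq)
    moreover have "branch y x \<inter> P \<subseteq> {x}" and "P - {x} \<noteq> {}"
      using isolates branch_self_empty marks_Diff_two_nonempty[of x x] by (auto simp: isolates_x_def)
    ultimately show False
      using marks by blast
  qed
  with y n have grow: "insert y (branch y x) \<subseteq> branch n x"
    using x_marked marks_in_tree by (intro branch_subset_step) auto
  moreover have "y \<notin> branch y x"
    using branch_subset by blast
  ultimately have "branch y x \<subset> branch n x"
    by blast
  moreover have "q = x" if "q \<in> branch n x \<inter> P" for q
  proof (rule ccontr)
    assume "q \<noteq> x"
    moreover have "branch n y = branch n x"
      using grow branch_eq by blast
    ultimately have "q \<in> branch y n \<inter> branch n y"
      using that marks by blast
    with edge_sides_disjoint[OF edge] show False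
      by blast
  qed
  moreover have "x \<in> branch n x"
    using x_near grow by blast
  ultimately show ?thesis
    using n x_marked by (auto simp: isolates_x_def)
qed

lemma pivot_exists: "\<exists>y. pivot y"
proof -
  have "\<exists>y'. pivot y'" if "isolates_x y" for y
    using that
  proof (induction "card Vt - card (branch y x)" arbitrary: y rule: less_induct)
    case less
    have y: "y \<in> Vt"
      using less.prems by (simp add: isolates_x_def)
    show ?case
    proof (cases "card (marked_branches y) < (if y \<in> P then 2 else 3)")
      case True
      with less.prems obtain n where "{y, n} \<in> Et" "P - {x} \<subseteq> branch y n"
        using marks_in_one_branch_if_unsaturated by blast
      with less.prems have n: "isolates_x n" "branch y x \<subset> branch n x"
        using isolates_x_advance by blast+
      have "branch n x \<subseteq> Vt"
        using branch_subset by blast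
      then have "card (branch n x) \<le> card Vt" "card (branch y x) < card (branch n x)"
        using n(2) finite_vertices by (auto intro: card_mono psubset_card_mono finite_subset)
      then have "card Vt - card (branch n x) < card Vt - card (branch y x)"
        by linarith
      then show ?thesis
        using n(1) by (rule less.hyps)
    next
      case False
      with card_marked_branches_le[OF y] have "card (marked_branches y) = (if y \<in> P then 2 else 3)"
        by linarith
      with less.prems show ?thesis
        by (blast intro: pivot_if_saturated)
    qed
  qed
  moreover have "isolates_x x"
    using x_marked marks_in_tree by (auto simp: isolates_x_def)
  ultimately show ?thesis
    by blast
qed

theorem ex1_pivot: "\<exists>!y. pivot y"
proof -
  obtain y where "pivot y"
    using pivot_exists by blast
  moreover have "y' = y" if "pivot y'" for y'
    using that \<open>pivot y\<close> splits_two_one_unique by (simp add: pivot_def)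
  ultimately show ?thesis
    by (rule ex1I)
qed

end

lemma RP_component_tree:
  assumes simple: "simple_graph VR ER" and tau: "(T, F) \<in> RP VR ER P1 P2" and "x \<in> P1"
  shows "finite_tree (comp VR F x) {g \<in> F. g \<subseteq> comp VR F x}" and "P1 \<subseteq> comp VR F x"
proof -
  have "F \<subseteq> ER" "acyclic_edges F" and "\<exists>C\<in>components VR F. P1 \<subseteq> C"
    using tau unfolding RP_def spanning_2forest_def by auto
  then obtain C where "C \<in> components VR F" "P1 \<subseteq> C"
    by blast
  moreover from this have "C = comp VR F x"
    using \<open>x \<in> P1\<close> by (intro components_eq_comp) auto
  ultimately show marks: "P1 \<subseteq> comp VR F x"
    by simp
  show "finite_tree (comp VR F x) {g \<in> F. g \<subseteq> comp VR F x}"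
  proof (rule finite_tree_comp)
    show "simple_graph VR F"
      using simple \<open>F \<subseteq> ER\<close> by (auto simp: simple_graph_def)
    show "x \<in> VR"
      using marks \<open>x \<in> P1\<close> by (auto simp: comp_def)
  qed fact
qed

lemma deg_RP_forest_le:
  assumes "finite E" and "ER \<subseteq> E" and tau: "(T, F) \<in> RP VR ER P1 P2" and "Et \<subseteq> F"
    and "t \<in> T" "u \<in> t" and A: "A \<subseteq> {g \<in> E - ER. u \<in> g}"
  shows "deg Et u \<le> deg E u - Suc (card A)"
proof -
  have "T \<inter> F = {}" "T \<subseteq> ER" "F \<subseteq> ER"
    using tau by (auto simp: RP_def spanning_tree_def spanning_2forest_def)
  with assms have "Et \<subseteq> E - insert t A" "insert t A \<subseteq> {g \<in> E. u \<in> g}" "t \<notin> A"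
    by auto
  moreover have "A \<subseteq> E"
    using A by auto
  then have "finite A"
    using \<open>finite E\<close> by (rule finite_subset)
  ultimately show ?thesis
    using deg_le_Diff[OF \<open>finite E\<close>, of Et "insert t A" u] by simp
qed

lemma marked_tree_in_RP:
  assumes simple: "simple_graph V E" and deg_le_4: "\<forall>u\<in>V. deg E u \<le> 4"
    and simple_R: "simple_graph VR ER" and "VR \<subseteq> V" and "ER \<subseteq> E"
    and tau: "(T, F) \<in> RP VR ER P1 P2"
    and "x \<in> P1" and card: "card P1 = 4"
    and removed_edge: "\<forall>u\<in>P1. \<exists>g\<in>E - ER. u \<in> g"
  shows "marked_tree (comp VR F x) {g \<in> F. g \<subseteq> comp VR F x} P1 x"
proof -
  let ?Vt = "comp VR F x" and ?Et = "{g \<in> F. g \<subseteq> comp VR F x}"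
  note tree = RP_component_tree[OF simple_R tau \<open>x \<in> P1\<close>]
  have "?Vt \<subseteq> VR"
    by (auto simp: comp_def)
  have "E \<subseteq> Pow V" "finite (Pow V)"
    using simple by (auto simp: simple_graph_def)
  then have "finite E"
    by (rule finite_subset)
  have deg_le: "deg ?Et u \<le> 3 - card A"
    if "u \<in> ?Vt" and "A \<subseteq> {g \<in> E - ER. u \<in> g}" for u A
  proof -
    have "\<not> P1 \<subseteq> {u}"
      using card card_mono[of "{u}" P1] by auto
    then obtain u' where "u' \<in> P1" "u' \<noteq> u"
      by blast
    moreover have "u \<in> VR" "u' \<in> VR"
      using that(1) \<open>u' \<in> P1\<close> tree(2) \<open>?Vt \<subseteq> VR\<close> by auto
    moreover have "connected_graph VR T"
      using tau by (simp add: RP_def spanning_tree_def)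
    ultimately obtain t where "t \<in> T" "u \<in> t"
      using connected_graph_edge_at[of VR T u u'] by auto
    have "deg ?Et u \<le> deg E u - Suc (card A)"
      by (rule deg_RP_forest_le[OF \<open>finite E\<close> \<open>ER \<subseteq> E\<close> tau _ \<open>t \<in> T\<close> \<open>u \<in> t\<close> that(2)]) auto
    moreover have "deg E u \<le> 4"
      using deg_le_4 that(1) \<open>?Vt \<subseteq> VR\<close> \<open>VR \<subseteq> V\<close> by blast
    ultimately show ?thesis
      by linarith
  qed
  show ?thesis
  proof (intro marked_tree.intro marked_tree_axioms.intro tree \<open>x \<in> P1\<close> card)
    fix u assume "u \<in> ?Vt"
    then show "deg ?Et u \<le> 3"
      using deg_le[of u "{}"] by simp
  next
    fix u assume "u \<in> P1"
    then obtain r where "r \<in> E - ER" "u \<in> r"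
      using removed_edge by blast
    with \<open>u \<in> P1\<close> tree(2) show "deg ?Et u \<le> 2"
      using deg_le[of u "{r}"] by auto
  qed
qed

lemma trio_plus_one_marks:
  assumes simple: "simple_graph V E" and reg4: "\<forall>u\<in>V. deg E u = 4" and "v \<in> V" "w \<in> V"
    and "nbrs E v \<inter> nbrs E w = {}" and Nw: "nbrs E w = {v, a, b, c}" and Nv: "nbrs E v = {w, d, e, f}"
    and p1: "(p1 = {a, b, c, x} \<and> x \<in> {d, e, f}) \<or> (p1 = {d, e, f, x} \<and> x \<in> {a, b, c})"
  shows "card p1 = 4" and "\<forall>u\<in>p1. {w, u} \<in> E \<or> {v, u} \<in> E"
proof -
  have "card {v, a, b, c} = 4" "card {w, d, e, f} = 4"
    using card_nbrs_eq_deg[OF simple] assms(2-4) Nw Nv by metis+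
  then have "distinct [v, a, b, c]" "distinct [w, d, e, f]"
    using card_distinct[of "[v, a, b, c]"] card_distinct[of "[w, d, e, f]"] by simp_all
  moreover have "{a, b, c} \<inter> {d, e, f} = {}"
    using assms(5) Nw Nv by auto
  ultimately show "card p1 = 4"
    using p1 by auto
  show "\<forall>u\<in>p1. {w, u} \<in> E \<or> {v, u} \<in> E"
    using p1 Nw Nv by (auto simp: nbrs_def set_eq_iff)
qed

text \<open>Connectivity of \<open>K\<close>, the parity of \<open>|V|\<close>, the edge \<open>vw\<close> and the description of \<open>p2\<close>
  are not needed: only the degree bounds in the tree of the 2-forest containing \<open>p1\<close> matter.\<close>
theorem lemma4p3:
  fixes V :: "'a set" and E :: "'a set set"
    and v w a b c d e f x :: 'a and p1 p2 :: "'a set" and T F :: "'a set set"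
  assumes K: "simple_graph V E"
    and conn: "connected_graph V E"
    and reg4: "\<forall>u\<in>V. deg E u = 4"
    and odd: "odd (card V)"
    and vV: "v \<in> V" and wV: "w \<in> V"
    and vw: "{v, w} \<in> E"
    and nocommon: "nbrs E v \<inter> nbrs E w = {}"
    and Nw: "nbrs E w = {v, a, b, c}"
    and Nv: "nbrs E v = {w, d, e, f}"
    and p1: "(p1 = {a, b, c, x} \<and> x \<in> {d, e, f}) \<or> (p1 = {d, e, f, x} \<and> x \<in> {a, b, c})"
    and p2: "p2 = {a, b, c, d, e, f} - p1"
    and tau: "(T, F) \<in> RP (V - {v, w}) {g \<in> E. v \<notin> g \<and> w \<notin> g} p1 p2"
  shows "let Vt = comp (V - {v, w}) F x;
             Et = {g \<in> F. g \<subseteq> Vt}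
         in \<exists>!y. ((y \<in> p1 \<and> deg Et y = 2) \<or> (y \<notin> p1 \<and> deg Et y = 3)) \<and>
                 (\<exists>C1\<in>components (Vt - {y}) {g \<in> Et. y \<notin> g}.
                    \<exists>C2\<in>components (Vt - {y}) {g \<in> Et. y \<notin> g}.
                       card (C1 \<inter> p1) = 2 \<and> card (C2 \<inter> p1) = 1) \<and>
                 (x = y \<or> (\<exists>C\<in>components (Vt - {y}) {g \<in> Et. y \<notin> g}.
                             x \<in> C \<and> card (C \<inter> p1) = 1))"
proof -
  define VR ER where "VR = V - {v, w}" and "ER = {g \<in> E. v \<notin> g \<and> w \<notin> g}"
  have "simple_graph VR ER"
    using K by (fastforce simp: simple_graph_def VR_def ER_def)
  have "card p1 = 4" and "\<forall>u\<in>p1. {w, u} \<in> E \<or> {v, u} \<in> E"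
    using trio_plus_one_marks[OF K reg4 vV wV nocommon Nw Nv p1] by auto
  moreover have "\<forall>u\<in>p1. \<exists>g\<in>E - ER. u \<in> g"
  proof
    fix u assume "u \<in> p1"
    with calculation have "{w, u} \<in> E - ER \<or> {v, u} \<in> E - ER"
      by (auto simp: ER_def)
    then show "\<exists>g\<in>E - ER. u \<in> g"
      by blast
  qed
  moreover have "x \<in> p1" "\<forall>u\<in>V. deg E u \<le> 4"
    using p1 reg4 by auto
  ultimately interpret marked_tree "comp VR F x" "{g \<in> F. g \<subseteq> comp VR F x}" p1 x
    using marked_tree_in_RP[OF K _ \<open>simple_graph VR ER\<close>] tau
    unfolding VR_def ER_def by blast
  show ?thesis
    using ex1_pivot[unfolded pivot_def degree_saturated_def splits_two_one_def
        x_in_single_branch_def branches_def]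
    unfolding Let_def VR_def .
qed

end
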